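(* Let $\mathcal{Q}_1\subseteq\mathcal{Q}_2$ be congruences on $\mathbb{N}^d$. Then (i) $U(\mathcal{Q}_1)\subseteq U(\mathcal{Q}_2)$, and (ii) for each $\mathbf{q}\in\mathcal{Q}_2\setminus\mathcal{Q}_1$ there exists $\mathbf{p}\in U(\mathcal{Q}_2)\setminus U(\mathcal{Q}_1)$ with $\|\mathbf{p}\|\le\|\mathbf{q}\|$.
   Context: A congruence on $\mathbb{N}^d$ is an equivalence relation $\mathcal{Q}\subseteq\mathbb{N}^d\times\mathbb{N}^d$ with $(\mathbf{a},\mathbf{b})\in\mathcal{Q}\Rightarrow(\mathbf{a}+\mathbf{c},\mathbf{b}+\mathbf{c})\in\mathcal{Q}$ (seen as a subset of $\mathbb{N}^{2d}$). $\|\cdot\|$ is the maximum norm. For $X\subseteq\mathbb{N}^k$, $X\uparrow=\{\mathbf{y}\mid\exists\mathbf{x}\in X:\mathbf{x}\le\mathbf{y}\}$ (componentwise order). For a congruence $\mathcal{Q}$, $U(\mathcal{Q})\subseteq\mathbb{N}^{4d}$ is $U(\mathcal{Q})=\{(\mathbf{x},\mathbf{y},\mathbf{u},\mathbf{v})\mid(\mathbf{x},\mathbf{y})\in\mathcal{Q},(\mathbf{x}+\mathbf{u},\mathbf{y}+\mathbf{v})\in\mathcal{Q},(\mathbf{u},\mathbf{v})\ne(\mathbf{0},\mathbf{0})\}\uparrow$. *)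

theory Defs
  imports "HOL-Library.Function_Algebras"
begin

text \<open>Vectors of \<open>\<nat>^d\<close> are represented as functions \<open>'d \<Rightarrow> nat\<close> over a finite index type \<open>'d\<close>
  (d = CARD('d)); addition and the order \<open>\<le>\<close> on functions are componentwise.\<close>

type_synonym 'd vec = "'d \<Rightarrow> nat"

definition congruence :: "('d vec \<times> 'd vec) set \<Rightarrow> bool" where
  "congruence Q \<longleftrightarrow> equiv UNIV Q \<and>
     (\<forall>a b c. (a, b) \<in> Q \<longrightarrow> (a + c, b + c) \<in> Q)"

text \<open>Maximum norm; elements of \<open>\<nat>^{2d}\<close> / \<open>\<nat>^{4d}\<close> are tuples of \<open>\<nat>^d\<close> vectors.\<close>
definition vnorm :: "('d::finite) vec \<Rightarrow> nat" where
  "vnorm x = Max (range x)"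

definition norm2 :: "('d::finite) vec \<times> 'd vec \<Rightarrow> nat" where
  "norm2 p = max (vnorm (fst p)) (vnorm (snd p))"

definition norm4 :: "('d::finite) vec \<times> 'd vec \<times> 'd vec \<times> 'd vec \<Rightarrow> nat" where
  "norm4 p = (case p of (x, y, u, v) \<Rightarrow> max (max (vnorm x) (vnorm y)) (max (vnorm u) (vnorm v)))"

definition upclose4 :: "('d vec \<times> 'd vec \<times> 'd vec \<times> 'd vec) set \<Rightarrow> ('d vec \<times> 'd vec \<times> 'd vec \<times> 'd vec) set" where
  "upclose4 X = {(y1, y2, y3, y4). \<exists>(x1, x2, x3, x4) \<in> X. x1 \<le> y1 \<and> x2 \<le> y2 \<and> x3 \<le> y3 \<and> x4 \<le> y4}"

definition U :: "('d vec \<times> 'd vec) set \<Rightarrow> ('d vec \<times> 'd vec \<times> 'd vec \<times> 'd vec) set" where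
  "U Q = upclose4 {(x, y, u, v). (x, y) \<in> Q \<and> (x + u, y + v) \<in> Q \<and> (u, v) \<noteq> (0, 0)}"

end

theory Submission
  imports Defs "HOL-Library.FuncSet" "HOL-Library.Product_Order"
begin

text \<open>Pick \<open>(x, y) \<in> Q\<^sub>1\<close> maximal among the pairs of \<open>Q\<^sub>1\<close> below \<open>q = (a, b)\<close>, and
  let \<open>p = (x, y, a - x, b - y)\<close>; then \<open>p \<in> U(Q\<^sub>2)\<close> because \<open>(x, y)\<close> and \<open>(a, b)\<close> lie
  in \<open>Q\<^sub>2\<close>, and \<open>\<parallel>p\<parallel> \<le> \<parallel>q\<parallel>\<close>. If \<open>p\<close> were in \<open>U(Q\<^sub>1)\<close>, a generator
  \<open>(x', y', u, v) \<le> p\<close> would give, by translating the congruences \<open>x' \<sim> y'\<close>,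
  \<open>x' + u \<sim> y' + v\<close> and \<open>x \<sim> y\<close> against each other, \<open>x + u \<sim> y + v\<close> in \<open>Q\<^sub>1\<close>: a pair
  of \<open>Q\<^sub>1\<close> below \<open>q\<close> strictly above \<open>(x, y)\<close>, contradicting maximality.\<close>

lemma U_mono: "Q1 \<subseteq> Q2 \<Longrightarrow> U Q1 \<subseteq> U Q2"
  unfolding U_def upclose4_def by fastforce

lemma congruence_refl: "congruence Q \<Longrightarrow> (a, a) \<in> Q"
  unfolding congruence_def equiv_def by (auto dest: refl_onD)

lemma congruence_sym: "congruence Q \<Longrightarrow> (a, b) \<in> Q \<Longrightarrow> (b, a) \<in> Q"
  unfolding congruence_def equiv_def by (auto dest: symD)

lemma congruence_trans: "congruence Q \<Longrightarrow> (a, b) \<in> Q \<Longrightarrow> (b, c) \<in> Q \<Longrightarrow> (a, c) \<in> Q"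
  unfolding congruence_def equiv_def by (auto dest: transD)

lemma congruence_translate: "congruence Q \<Longrightarrow> (a, b) \<in> Q \<Longrightarrow> (a + c, b + c) \<in> Q"
  unfolding congruence_def by blast

lemma congruence_add_offsets:
  assumes Q: "congruence Q" and ab: "(a, b) \<in> Q"
    and uv: "(a + u, b + v) \<in> Q" and st: "(a + s, b + t) \<in> Q"
  shows "(a + s + u, b + t + v) \<in> Q"
proof -
  have "(a + s + u, b + v + s) \<in> Q"
    using congruence_translate[OF Q uv, of s] by (simp add: ac_simps)
  moreover have "(b + s, b + t) \<in> Q"
    using congruence_trans[OF Q congruence_sym[OF Q congruence_translate[OF Q ab]] st] .
  then have "(b + v + s, b + t + v) \<in> Q"
    using congruence_translate[OF Q, of "b + s" "b + t" v] by (simp add: ac_simps)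
  ultimately show ?thesis
    using congruence_trans[OF Q] by blast
qed

lemma add_diff_vec: "x \<le> (a :: 'd vec) \<Longrightarrow> x + (a - x) = a"
  by (auto simp: le_fun_def fun_eq_iff)

lemma add_le_vec: "x \<le> (a :: 'd vec) \<Longrightarrow> u \<le> a - x \<Longrightarrow> x + u \<le> a"
  by (auto simp: le_fun_def) (metis le_add_diff_inverse add_le_mono1 add.commute)

lemma U_congruence_offset:
  assumes Q: "congruence Q" and xy: "(x, y) \<in> Q" and p: "(x, y, u, v) \<in> U Q"
  obtains u' v' where "u' \<le> u" "v' \<le> v" "(u', v') \<noteq> (0, 0)" "(x + u', y + v') \<in> Q"
proof -
  obtain x' y' u' v' where le: "x' \<le> x" "y' \<le> y" "u' \<le> u" "v' \<le> v"
    and base: "(x', y') \<in> Q" and step: "(x' + u', y' + v') \<in> Q" and nz: "(u', v') \<noteq> (0, 0)"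
    using p unfolding U_def upclose4_def by auto
  have "(x' + (x - x'), y' + (y - y')) \<in> Q"
    using xy le by (simp add: add_diff_vec)
  then have "(x' + (x - x') + u', y' + (y - y') + v') \<in> Q"
    using congruence_add_offsets[OF Q base step] by blast
  then have "(x + u', y + v') \<in> Q"
    using le by (simp add: add_diff_vec)
  with le nz that show ?thesis by blast
qed

lemma finite_le_vec: "finite {x. x \<le> (a :: ('d::finite) vec)}"
proof (rule finite_subset)
  show "{x. x \<le> a} \<subseteq> PiE UNIV (\<lambda>i. {..a i})"
    by (auto simp: le_fun_def PiE_def extensional_def)
  show "finite (PiE (UNIV :: 'd set) (\<lambda>i. {..a i}))"
    by (rule finite_PiE) auto
qed

lemma exists_maximal_below:
  fixes a b :: "('d::finite) vec"
  assumes "(c, d) \<in> Q" "c \<le> a" "d \<le> b"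
  obtains x y where "(x, y) \<in> Q" "x \<le> a" "y \<le> b"
    "\<And>x' y'. (x', y') \<in> Q \<Longrightarrow> x' \<le> a \<Longrightarrow> y' \<le> b \<Longrightarrow> x \<le> x' \<Longrightarrow> y \<le> y' \<Longrightarrow> x' = x \<and> y' = y"
proof -
  let ?S = "{(x, y) \<in> Q. x \<le> a \<and> y \<le> b}"
  have "finite ?S"
    by (rule finite_subset[of _ "{x. x \<le> a} \<times> {y. y \<le> b}"]) (auto simp: finite_le_vec)
  moreover have "?S \<noteq> {}"
    using assms by blast
  ultimately obtain m where "m \<in> ?S" "\<forall>m' \<in> ?S. m \<le> m' \<longrightarrow> m = m'"
    using finite_has_maximal by blast
  with that show ?thesis
    by (cases m) fastforce
qed

lemma vnorm_mono: "x \<le> a \<Longrightarrow> vnorm x \<le> vnorm (a :: ('d::finite) vec)"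
  unfolding vnorm_def le_fun_def
  by (simp add: Max_le_iff) (meson Max_ge finite_UNIV finite_imageI le_trans rangeI)

lemma norm4_split_le:
  fixes a b :: "('d::finite) vec"
  assumes "x \<le> a" "y \<le> b"
  shows "norm4 (x, y, a - x, b - y) \<le> norm2 (a, b)"
proof -
  have "vnorm x \<le> vnorm a" "vnorm (a - x) \<le> vnorm a"
    "vnorm y \<le> vnorm b" "vnorm (b - y) \<le> vnorm b"
    using assms by (auto intro!: vnorm_mono simp: le_fun_def)
  then show ?thesis
    unfolding norm4_def norm2_def by (auto simp: max_def)
qed

lemma split_mem_U:
  assumes "(x, y) \<in> Q" "(a, b) \<in> Q" "x \<le> a" "y \<le> b" "(x, y) \<noteq> (a, b)"
  shows "(x, y, a - x, b - y) \<in> U Q"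
proof -
  have "(a - x, b - y) \<noteq> (0, 0)"
    using assms(3-5) add_diff_vec by force
  with assms have "(x, y, a - x, b - y) \<in>
      {(x, y, u, v). (x, y) \<in> Q \<and> (x + u, y + v) \<in> Q \<and> (u, v) \<noteq> (0, 0)}"
    by (simp add: add_diff_vec)
  then show ?thesis
    unfolding U_def upclose4_def by fastforce
qed

lemma split_not_mem_U:
  assumes Q: "congruence Q" and xy: "(x, y) \<in> Q" and "x \<le> a" "y \<le> b"
    and maximal: "\<And>x' y'. (x', y') \<in> Q \<Longrightarrow> x' \<le> a \<Longrightarrow> y' \<le> b \<Longrightarrow> x \<le> x' \<Longrightarrow> y \<le> y'
      \<Longrightarrow> x' = x \<and> y' = y"
  shows "(x, y, a - x, b - y) \<notin> U Q"
proof
  assume "(x, y, a - x, b - y) \<in> U Q"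
  then obtain u v where uv: "u \<le> a - x" "v \<le> b - y" "(u, v) \<noteq> (0, 0)" "(x + u, y + v) \<in> Q"
    using U_congruence_offset[OF Q xy] by metis
  have "x + u \<le> a" "y + v \<le> b"
    using uv(1,2) \<open>x \<le> a\<close> \<open>y \<le> b\<close> by (simp_all add: add_le_vec)
  then have "x + u = x \<and> y + v = y"
    using maximal[OF uv(4)] by (simp add: le_fun_def)
  with uv(3) show False
    by (simp add: fun_eq_iff)
qed

lemma separating_quadruple:
  fixes a b :: "('d::finite) vec"
  assumes Q1: "congruence Q1" and "Q1 \<subseteq> Q2" and "(a, b) \<in> Q2" "(a, b) \<notin> Q1"
  shows "\<exists>p \<in> U Q2 - U Q1. norm4 p \<le> norm2 (a, b)"
proof -
  have "0 \<le> a" "0 \<le> b"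
    by (simp_all add: le_fun_def)
  then obtain x y where xy: "(x, y) \<in> Q1" "x \<le> a" "y \<le> b"
    and maximal: "\<And>x' y'. (x', y') \<in> Q1 \<Longrightarrow> x' \<le> a \<Longrightarrow> y' \<le> b \<Longrightarrow> x \<le> x' \<Longrightarrow> y \<le> y'
      \<Longrightarrow> x' = x \<and> y' = y"
    by (rule exists_maximal_below[OF congruence_refl[OF Q1]]) auto
  have "(x, y, a - x, b - y) \<in> U Q2"
    using split_mem_U[of x y Q2 a b] xy assms(2-4) by auto
  moreover have "(x, y, a - x, b - y) \<notin> U Q1"
    using split_not_mem_U[OF Q1 xy maximal] by blast
  ultimately show ?thesis
    using norm4_split_le[OF xy(2,3)] by blast
qed

theorem lemma14:
  fixes Q1 Q2 :: "(('d::finite) vec \<times> 'd vec) set"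
  assumes "congruence Q1" and "congruence Q2" and "Q1 \<subseteq> Q2"
  shows "U Q1 \<subseteq> U Q2 \<and>
         (\<forall>q \<in> Q2 - Q1. \<exists>p \<in> U Q2 - U Q1. norm4 p \<le> norm2 q)"
  using U_mono[OF assms(3)] separating_quadruple[OF assms(1,3)] by auto

end
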